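(* Let $S$ and $R$ be finite sequences of formulas and $I,J$ models. Then $I\equiv_{\emptyset S\cdot R}J$ holds if and only if both $I\equiv_{\emptyset S}J$ and $I\equiv_{\emptyset R}J$ hold.
   Context: Propositional models are truth assignments over a finite set of variables; a formula used where a set of models is expected stands for its set of models. A doxastic state is a sequence $C=[C(0),\ldots,C(k)]$ of nonempty, pairwise disjoint sets of models covering all models; $I\le_C J$ iff $I\in C(i)$, $J\in C(j)$ with $i\le j$; $I\equiv_C J$ iff $I\le_C J$ and $J\le_C I$. The flat doxastic state $\emptyset$ is $[\text{all models}]$. Lexicographic revision: $C\,\mathrm{lex}(A)=[C(0)\cap A,\ldots,C(k)\cap A,C(0)\setminus A,\ldots,C(k)\setminus A]$, empty sets discarded. For a sequence of formulas $T=[T_1,\ldots,T_n]$, $\emptyset T$ denotes $\emptyset$ revised lexicographically by $T_1$, then $T_2$, ..., then $T_n$. $S\cdot R$ is concatenation. *)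

theory Defs
  imports Main
begin

datatype 'v form = Var 'v | Top | Bot | Neg "'v form"
  | And "'v form" "'v form" | Or "'v form" "'v form"

type_synonym 'v model = "'v \<Rightarrow> bool"

fun holds :: "'v model \<Rightarrow> 'v form \<Rightarrow> bool" where
  "holds I (Var x) = I x"
| "holds I Top = True"
| "holds I Bot = False"
| "holds I (Neg A) = (\<not> holds I A)"
| "holds I (And A B) = (holds I A \<and> holds I B)"
| "holds I (Or A B) = (holds I A \<or> holds I B)"

definition mods :: "'v form \<Rightarrow> 'v model set" where
  "mods A = {I. holds I A}"

type_synonym 'v doxstate = "'v model set list"

definition flat :: "'v doxstate" where
  "flat = [UNIV]"

definition lex :: "'v doxstate \<Rightarrow> 'v form \<Rightarrow> 'v doxstate" where
  "lex C A = filter (\<lambda>X. X \<noteq> {})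
     (map (\<lambda>X. X \<inter> mods A) C @ map (\<lambda>X. X - mods A) C)"

text \<open>\<emptyset>T: the flat state revised by T_1, then T_2, ..., then T_n.\<close>
definition revseq :: "'v form list \<Rightarrow> 'v doxstate" where
  "revseq T = foldl lex flat T"

definition le_C :: "'v doxstate \<Rightarrow> 'v model \<Rightarrow> 'v model \<Rightarrow> bool" where
  "le_C C I J = (\<exists>i j. i < length C \<and> j < length C \<and> I \<in> C ! i \<and> J \<in> C ! j \<and> i \<le> j)"

definition eq_C :: "'v doxstate \<Rightarrow> 'v model \<Rightarrow> 'v model \<Rightarrow> bool" where
  "eq_C C I J = (le_C C I J \<and> le_C C J I)"

end

theory Submission
  imports Defs
begin

text \<open>
  Lexicographic revision by A splits every class of a state into its A-part and its non-A-part.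
  Starting from the flat state, every class of \<emptyset>T therefore consists of the models that agree
  on all formulas of T with a given one, and since each model lies in exactly one class,
  I \<equiv> J in \<emptyset>T means that I and J agree on every formula of T.
  Agreeing on every formula of S \<cdot> R is agreeing on those of S and on those of R.
\<close>

definition same_class :: "'v doxstate \<Rightarrow> 'v model \<Rightarrow> 'v model \<Rightarrow> bool" where
  "same_class C I J \<longleftrightarrow> (\<exists>X\<in>set C. I \<in> X \<and> J \<in> X)"

definition unique_class :: "'v doxstate \<Rightarrow> bool" where
  "unique_class C \<longleftrightarrow> (\<forall>I. length (filter (\<lambda>X. I \<in> X) C) = 1)"

lemma set_lex:
  "set (lex C A) = {Y. Y \<noteq> {} \<and> (\<exists>X\<in>set C. Y = X \<inter> mods A \<or> Y = X - mods A)}"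
  unfolding lex_def by auto

lemma same_class_lex:
  "same_class (lex C A) I J \<longleftrightarrow> same_class C I J \<and> (holds I A \<longleftrightarrow> holds J A)"
proof
  assume "same_class (lex C A) I J"
  then obtain X Y where "X \<in> set C" "Y = X \<inter> mods A \<or> Y = X - mods A" "I \<in> Y" "J \<in> Y"
    unfolding same_class_def set_lex by blast
  then show "same_class C I J \<and> (holds I A \<longleftrightarrow> holds J A)"
    unfolding same_class_def mods_def by blast
next
  assume "same_class C I J \<and> (holds I A \<longleftrightarrow> holds J A)"
  then obtain X where X: "X \<in> set C" "I \<in> X" "J \<in> X" and agree: "holds I A \<longleftrightarrow> holds J A"
    unfolding same_class_def by blast
  define Y where "Y = (if holds I A then X \<inter> mods A else X - mods A)"
  have "I \<in> Y" "J \<in> Y"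
    using X agree by (auto simp: Y_def mods_def)
  moreover have "Y \<in> set (lex C A)"
    using X(1) \<open>I \<in> Y\<close> unfolding set_lex Y_def by auto
  ultimately show "same_class (lex C A) I J"
    unfolding same_class_def by blast
qed

lemma same_class_revseq:
  "same_class (revseq T) I J \<longleftrightarrow> (\<forall>A\<in>set T. holds I A \<longleftrightarrow> holds J A)"
proof (induction T rule: rev_induct)
  case Nil
  then show ?case by (simp add: revseq_def flat_def same_class_def)
next
  case (snoc A T)
  then show ?case by (auto simp: revseq_def same_class_lex)
qed

lemma length_filter_mem_lex:
  "length (filter (\<lambda>X. I \<in> X) (lex C A)) = length (filter (\<lambda>X. I \<in> X) C)"
proof -
  have "length (filter (\<lambda>X. I \<in> X) (lex C A))
      = length (filter (\<lambda>X. I \<in> X \<and> I \<in> mods A) C) + length (filter (\<lambda>X. I \<in> X \<and> I \<notin> mods A) C)"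
    unfolding lex_def
    by (simp add: comp_def) (intro arg_cong2[where f = "(+)"] arg_cong[where f = length] filter_cong; blast)
  also have "\<dots> = length (filter (\<lambda>X. I \<in> X) C)"
    by (cases "I \<in> mods A") simp_all
  finally show ?thesis .
qed

lemma unique_class_revseq: "unique_class (revseq T)"
proof (induction T rule: rev_induct)
  case Nil
  then show ?case by (simp add: revseq_def flat_def unique_class_def)
next
  case (snoc A T)
  then show ?case by (simp add: revseq_def unique_class_def length_filter_mem_lex)
qed

lemma unique_class_index:
  assumes "unique_class C" "i < length C" "I \<in> C ! i" "i' < length C" "I \<in> C ! i'"
  shows "i = i'"
proof -
  have "card {k. k < length C \<and> I \<in> C ! k} = 1"
    using assms(1) unfolding unique_class_def by (simp add: length_filter_conv_card)
  with assms(2-) show ?thesis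
    by (metis (mono_tags, lifting) card_1_singletonE mem_Collect_eq singletonD)
qed

lemma eq_C_iff_same_class:
  assumes "unique_class C"
  shows "eq_C C I J \<longleftrightarrow> same_class C I J"
proof
  assume "eq_C C I J"
  then obtain i j i' j' where
    "i < length C" "j < length C" "I \<in> C ! i" "J \<in> C ! j" "i \<le> j"
    "i' < length C" "j' < length C" "J \<in> C ! j'" "I \<in> C ! i'" "j' \<le> i'"
    unfolding eq_C_def le_C_def by blast
  moreover from this have "i = i'" "j = j'"
    using unique_class_index[OF assms] by blast+
  ultimately show "same_class C I J"
    unfolding same_class_def by (metis le_antisym nth_mem)
next
  assume "same_class C I J"
  then show "eq_C C I J"
    unfolding same_class_def eq_C_def le_C_def by (metis in_set_conv_nth order_refl)
qed

theorem mainTheorem20: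
  fixes S R :: "('v::finite) form list" and I J :: "'v model"
  shows "eq_C (revseq (S @ R)) I J \<longleftrightarrow> (eq_C (revseq S) I J \<and> eq_C (revseq R) I J)"
  by (auto simp: eq_C_iff_same_class[OF unique_class_revseq] same_class_revseq)

end
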